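(* For integers $r\ge 3$ and $n \ge \frac{(r-1)(2r+1)}{2}$, $$\mathrm{co}^{+}\mathrm{ex}(n,\mathrm{T}_r)=\left\lfloor \frac{n}{r}\right\rfloor,$$ where $\mathrm{co}^{+}\mathrm{ex}(n,\mathrm{T}_r)$ is the maximum of $\delta_{r-1}^{+}(\mathcal{H})$ over all $n$-vertex $\mathrm{T}_r$-free $r$-graphs $\mathcal{H}$.
   Context: An $r$-graph $\mathcal{H}$ is a collection of $r$-subsets (edges) of a finite vertex set $V(\mathcal{H})$. The shadow is $\partial\mathcal{H}=\{e\in\binom{V(\mathcal{H})}{r-1}\colon e\subseteq E \text{ for some } E\in\mathcal{H}\}$. For $e\in\partial\mathcal{H}$, $N_{\mathcal{H}}(e)=\{v\in V(\mathcal{H})\colon e\cup\{v\}\in\mathcal{H}\}$. The minimum positive codegree is $\delta_{r-1}^{+}(\mathcal{H})=\min\{|N_{\mathcal{H}}(e)|\colon e\in\partial\mathcal{H}\}$ (for the empty $r$-graph take this to be $0$). The $r$-uniform generalized triangle is $\mathrm{T}_r=\{\{1,\ldots,r-1,r\},\{1,\ldots,r-1,r+1\},\{r,r+1,\ldots,2r-1\}\}$; $\mathcal{H}$ is $\mathrm{T}_r$-free if it contains no subhypergraph isomorphic to $\mathrm{T}_r$. *)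

theory Defs
  imports Main
begin

definition is_rgraph :: "nat \<Rightarrow> 'a set \<Rightarrow> 'a set set \<Rightarrow> bool" where
  "is_rgraph r V H \<longleftrightarrow> (\<forall>E\<in>H. E \<subseteq> V \<and> card E = r)"

definition shadow :: "nat \<Rightarrow> 'a set set \<Rightarrow> 'a set set" where
  "shadow r H = {e. card e = r - 1 \<and> (\<exists>E\<in>H. e \<subseteq> E)}"

definition nbhd :: "'a set \<Rightarrow> 'a set set \<Rightarrow> 'a set \<Rightarrow> 'a set" where
  "nbhd V H e = {v\<in>V. insert v e \<in> H}"

definition min_pos_codeg :: "nat \<Rightarrow> 'a set \<Rightarrow> 'a set set \<Rightarrow> nat" where
  "min_pos_codeg r V H =
     (if H = {} then 0 else Min ((\<lambda>e. card (nbhd V H e)) ` shadow r H))"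

definition gen_triangle :: "nat \<Rightarrow> nat set set" where
  "gen_triangle r = {{1..r}, {1..<r} \<union> {r+1}, {r..2*r-1}}"

definition contains_copy :: "nat set set \<Rightarrow> 'a set set \<Rightarrow> bool" where
  "contains_copy F H \<longleftrightarrow>
     (\<exists>f. inj_on f (\<Union>F) \<and> (\<forall>E\<in>F. f ` E \<in> H))"

definition T_free :: "nat \<Rightarrow> 'a set set \<Rightarrow> bool" where
  "T_free r H \<longleftrightarrow> \<not> contains_copy (gen_triangle r) H"

text \<open>co^+ex(n, T_r): max of min positive codegree over n-vertex T_r-free r-graphs,
  vertex set taken as {0..<n} (all n-vertex r-graphs are isomorphic to one on this set).\<close>
definition coplus_ex_T :: "nat \<Rightarrow> nat \<Rightarrow> nat" where
  "coplus_ex_T n r =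
     Max {min_pos_codeg r {0..<n} H | H. is_rgraph r {0..<n} H \<and> T_free r H}"

end

theory Submission
  imports Defs
begin

text \<open>
  Let \<open>d\<close> be the minimum positive codegree of a \<open>T\<^sub>r\<close>-free \<open>r\<close>-graph on \<open>n\<close>
  vertices. If \<open>d \<ge> r\<close>, then for every edge \<open>E\<close> the neighbourhoods of the \<open>r\<close> sets
  \<open>E - {v}\<close> are pairwise disjoint, so \<open>r d \<le> n\<close>. Indeed, a common vertex \<open>u\<close> of the
  neighbourhoods of \<open>A = E - {v}\<close> and \<open>E - {w}\<close> yields the edges \<open>A + v\<close>, \<open>A + u\<close> and an
  edge through \<open>v\<close> and \<open>u\<close>; as every codegree exceeds \<open>|A|\<close>, the vertices of \<open>A\<close> can be
  swapped out of the latter edge one at a time, giving an edge through \<open>v, u\<close> disjoint from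
  \<open>A\<close>, i.e. a copy of \<open>T\<^sub>r\<close>. If \<open>d < r\<close>, then \<open>d \<le> r - 1 \<le> n div r\<close> by the bound on \<open>n\<close>.

  The complete \<open>r\<close>-partite \<open>r\<close>-graph with parts of size \<open>n div r\<close> has every
  positive codegree at least \<open>n div r\<close>, and it is \<open>T\<^sub>r\<close>-free: two edges through the same
  \<open>(r-1)\<close>-set \<open>A\<close> put their other vertices in the one part \<open>A\<close> misses, so no edge contains both.
\<close>

lemma finite_shadow:
  assumes "is_rgraph r V H" and "finite V"
  shows "finite (shadow r H)"
proof -
  have "shadow r H \<subseteq> Pow V"
    using assms(1) unfolding shadow_def is_rgraph_def by blast
  then show ?thesis
    using assms(2) by (simp add: finite_subset)
qed

lemma edge_minus_vertex_in_shadow: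
  assumes "is_rgraph r V H" and "E \<in> H" and "v \<in> E"
  shows "E - {v} \<in> shadow r H"
  using assms unfolding shadow_def is_rgraph_def by (auto simp: card_Diff_singleton_if)

lemma min_pos_codeg_le:
  assumes "is_rgraph r V H" and "finite V" and "D \<in> shadow r H"
  shows "min_pos_codeg r V H \<le> card (nbhd V H D)"
proof -
  have "H \<noteq> {}"
    using assms(3) unfolding shadow_def by blast
  then show ?thesis
    using assms finite_shadow[OF assms(1,2)] unfolding min_pos_codeg_def by simp
qed

lemma le_min_pos_codeg:
  assumes "is_rgraph r V H" and "finite V" and "H \<noteq> {}" and "r > 0"
    and "\<And>D. D \<in> shadow r H \<Longrightarrow> m \<le> card (nbhd V H D)"
  shows "m \<le> min_pos_codeg r V H"
proof -
  obtain E where "E \<in> H"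
    using assms(3) by blast
  moreover have "E \<noteq> {}"
    using assms(1,4) \<open>E \<in> H\<close> unfolding is_rgraph_def by auto
  ultimately have "shadow r H \<noteq> {}"
    using edge_minus_vertex_in_shadow[OF assms(1)] by blast
  then show ?thesis
    using assms finite_shadow[OF assms(1,2)] unfolding min_pos_codeg_def by simp
qed

lemma exists_edge_avoiding:
  assumes H: "is_rgraph r V H" and "finite A"
    and codeg: "\<And>D. D \<in> shadow r H \<Longrightarrow> card A < card (nbhd V H D)"
    and "F \<in> H" and "P \<subseteq> F" and "P \<inter> A = {}"
  shows "\<exists>F'\<in>H. P \<subseteq> F' \<and> F' \<inter> A = {}"
  using assms(4-)
proof (induction "card (F \<inter> A)" arbitrary: F)
  case 0
  then show ?case
    using \<open>finite A\<close> by auto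
next
  case (Suc k)
  then obtain z where z: "z \<in> F \<inter> A"
    by (metis card.empty ex_in_conv nat.distinct(1))
  define D where "D = F - {z}"
  have "D \<in> shadow r H"
    unfolding D_def using edge_minus_vertex_in_shadow[OF H \<open>F \<in> H\<close>] z by blast
  then have "\<not> nbhd V H D \<subseteq> A"
    using codeg card_mono[OF \<open>finite A\<close>] by (meson leD)
  then obtain y where y: "y \<in> nbhd V H D" "y \<notin> A"
    by blast
  have "insert y D \<inter> A = (F \<inter> A) - {z}"
    using y(2) unfolding D_def by auto
  then have "k = card (insert y D \<inter> A)"
    using Suc.hyps(2) z \<open>finite A\<close> by simp
  moreover have "insert y D \<in> H" "P \<subseteq> insert y D"
    using y(1) Suc.prems z unfolding nbhd_def D_def by auto
  ultimately show ?case
    using Suc.hyps(1) Suc.prems(3) by blast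
qed

lemma Union_gen_triangle: "r \<ge> 2 \<Longrightarrow> \<Union> (gen_triangle r) = {1..2*r-1}"
  unfolding gen_triangle_def by auto

lemma contains_gen_triangleE:
  assumes "contains_copy (gen_triangle r) H" and "r \<ge> 2"
  obtains A a b F where "finite A" "card A = r - 1" "a \<notin> A" "b \<notin> A" "a \<noteq> b"
    "insert a A \<in> H" "insert b A \<in> H" "F \<in> H" "a \<in> F" "b \<in> F" "F \<inter> A = {}"
proof -
  obtain f where inj: "inj_on f {1..2*r-1}" and edges: "\<forall>E\<in>gen_triangle r. f ` E \<in> H"
    using assms Union_gen_triangle unfolding contains_copy_def by metis
  define A where "A = f ` {1..<r}"
  have "{1..r} = insert r {1..<r}"
    using \<open>r \<ge> 2\<close> by auto
  then have "f ` {1..r} = insert (f r) A" "f ` ({1..<r} \<union> {r+1}) = insert (f (r+1)) A"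
    unfolding A_def by auto
  then have "insert (f r) A \<in> H" "insert (f (r+1)) A \<in> H" "f ` {r..2*r-1} \<in> H"
    using edges unfolding gen_triangle_def by auto
  moreover have "inj_on f {1..<r}"
    using inj by (rule inj_on_subset) auto
  then have "card A = r - 1"
    unfolding A_def by (simp add: card_image)
  moreover have "f r \<notin> A" "f (r+1) \<notin> A" "f r \<noteq> f (r+1)" "f ` {r..2*r-1} \<inter> A = {}"
    unfolding A_def using \<open>r \<ge> 2\<close> by (auto simp: inj_on_eq_iff[OF inj])
  moreover have "f r \<in> f ` {r..2*r-1}" "f (r+1) \<in> f ` {r..2*r-1}"
    using \<open>r \<ge> 2\<close> by auto
  ultimately show ?thesis
    using that[of A "f r" "f (r+1)"] unfolding A_def by blast
qed

lemma contains_gen_triangleI: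
  assumes "finite A" "card A = r - 1" "a \<notin> A" "b \<notin> A" "a \<noteq> b"
    and "insert a A \<in> H" "insert b A \<in> H"
    and "F \<in> H" "card F = r" "a \<in> F" "b \<in> F" "F \<inter> A = {}" and "r \<ge> 2"
  shows "contains_copy (gen_triangle r) H"
proof -
  define G where "G = F - {a, b}"
  have "finite F"
    using \<open>card F = r\<close> \<open>r \<ge> 2\<close> card.infinite by fastforce
  then have "card G = r - 2"
    unfolding G_def using assms(5,9-11) by (simp add: card_Diff_subset)
  obtain g where g: "bij_betw g {1..<r} A"
    using finite_same_card_bij[of "{1..<r}" A] assms(1,2) by auto
  obtain h where h: "bij_betw h {r+2..2*r-1} G"
    using finite_same_card_bij[of "{r+2..2*r-1}" G] \<open>finite F\<close> \<open>card G = r - 2\<close>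
    unfolding G_def by auto
  define f where "f i = (if i < r then g i else if i = r then a else if i = r+1 then b else h i)" for i
  have fA: "bij_betw f {1..<r} A"
    using g by (rule bij_betw_cong[THEN iffD1, rotated]) (simp add: f_def)
  have fG: "bij_betw f {r+2..2*r-1} G"
    using h by (rule bij_betw_cong[THEN iffD1, rotated]) (simp add: f_def)
  have fab: "f r = a" "f (r+1) = b"
    by (simp_all add: f_def)
  have "bij_betw f ({1..<r} \<union> {r} \<union> {r+1} \<union> {r+2..2*r-1}) (A \<union> {a} \<union> {b} \<union> G)"
    using assms(3-5,12) by (intro bij_betw_combine fA fG bij_betw_singletonI fab) (auto simp: G_def)
  moreover have "{1..<r} \<union> {r} \<union> {r+1} \<union> {r+2..2*r-1} = {1..2*r-1}"
    using \<open>r \<ge> 2\<close> by auto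
  ultimately have inj: "inj_on f (\<Union> (gen_triangle r))"
    using Union_gen_triangle[OF \<open>r \<ge> 2\<close>] by (metis bij_betw_imp_inj_on)
  have "{1..r} = insert r {1..<r}"
    using \<open>r \<ge> 2\<close> by auto
  then have core_edges: "f ` {1..r} = insert a A" "f ` ({1..<r} \<union> {r+1}) = insert b A"
    using bij_betw_imp_surj_on[OF fA] fab by auto
  have "{r..2*r-1} = {r, r+1} \<union> {r+2..2*r-1}"
    using \<open>r \<ge> 2\<close> by auto
  then have apex_edge: "f ` {r..2*r-1} = F"
    using bij_betw_imp_surj_on[OF fG] fab assms(10,11) unfolding G_def by auto
  show ?thesis
    unfolding contains_copy_def
  proof (intro exI conjI)
    show "\<forall>E\<in>gen_triangle r. f ` E \<in> H"
      unfolding gen_triangle_def using core_edges apex_edge assms(6-8) by simp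
  qed (rule inj)
qed

lemma nbhds_of_edge_disjoint:
  assumes H: "is_rgraph r V H" and "r \<ge> 2" and "T_free r H"
    and codeg: "\<And>D. D \<in> shadow r H \<Longrightarrow> r \<le> card (nbhd V H D)"
    and "E \<in> H" "v \<in> E" "w \<in> E" "v \<noteq> w"
  shows "nbhd V H (E - {v}) \<inter> nbhd V H (E - {w}) = {}"
proof (rule ccontr)
  assume "nbhd V H (E - {v}) \<inter> nbhd V H (E - {w}) \<noteq> {}"
  then obtain u where u: "insert u (E - {v}) \<in> H" "insert u (E - {w}) \<in> H"
    unfolding nbhd_def by auto
  have "card E = r"
    using H \<open>E \<in> H\<close> unfolding is_rgraph_def by auto
  with \<open>r \<ge> 2\<close> have "finite E"
    using card.infinite by fastforce
  define A where "A = E - {v}"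
  have "finite A" "card A = r - 1"
    unfolding A_def using \<open>finite E\<close> \<open>card E = r\<close> \<open>v \<in> E\<close> by auto
  \<comment> \<open>otherwise \<open>insert u (E - {x}) = E - {x}\<close> would be an edge with only \<open>r - 1\<close> vertices\<close>
  have "u \<notin> E - {x}" if "insert u (E - {x}) \<in> H" "x \<in> E" for x
    using that H \<open>finite E\<close> \<open>card E = r\<close> \<open>r \<ge> 2\<close> unfolding is_rgraph_def
    by (metis card_Diff1_less_iff insert_absorb less_irrefl)
  then have "u \<notin> E"
    using u \<open>v \<in> E\<close> \<open>w \<in> E\<close> \<open>v \<noteq> w\<close> by blast
  have "\<And>D. D \<in> shadow r H \<Longrightarrow> card A < card (nbhd V H D)"
    using codeg \<open>card A = r - 1\<close> \<open>r \<ge> 2\<close> by fastforce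
  moreover have "{v, u} \<subseteq> insert u (E - {w})" "{v, u} \<inter> A = {}"
    unfolding A_def using \<open>v \<in> E\<close> \<open>v \<noteq> w\<close> \<open>u \<notin> E\<close> by auto
  ultimately obtain F where F: "F \<in> H" "{v, u} \<subseteq> F" "F \<inter> A = {}"
    using exists_edge_avoiding[OF H \<open>finite A\<close> _ u(2)] by meson
  have "card F = r"
    using H \<open>F \<in> H\<close> unfolding is_rgraph_def by auto
  moreover have "insert v A \<in> H" "insert u A \<in> H" "v \<notin> A" "u \<notin> A" "v \<noteq> u"
    unfolding A_def using \<open>E \<in> H\<close> \<open>v \<in> E\<close> u(1) \<open>u \<notin> E\<close> by (auto simp: insert_absorb)
  ultimately have "contains_copy (gen_triangle r) H"
    using contains_gen_triangleI[OF \<open>finite A\<close> \<open>card A = r - 1\<close>] F \<open>r \<ge> 2\<close> by simp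
  then show False
    using \<open>T_free r H\<close> unfolding T_free_def by blast
qed

lemma min_pos_codeg_T_free_le:
  assumes H: "is_rgraph r V H" and "finite V" and "r \<ge> 2" and "T_free r H"
  shows "min_pos_codeg r V H \<le> max (r - 1) (card V div r)"
proof (cases "min_pos_codeg r V H \<le> r - 1")
  case False
  define d where "d = min_pos_codeg r V H"
  have codeg: "d \<le> card (nbhd V H D)" if "D \<in> shadow r H" for D
    unfolding d_def using min_pos_codeg_le[OF H \<open>finite V\<close> that] .
  have "H \<noteq> {}"
    using False unfolding min_pos_codeg_def by auto
  then obtain E where "E \<in> H"
    by blast
  have "card E = r"
    using H \<open>E \<in> H\<close> unfolding is_rgraph_def by auto
  with \<open>r \<ge> 2\<close> have "finite E"
    using card.infinite by fastforce
  have "r * d = (\<Sum>v\<in>E. d)"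
    using \<open>card E = r\<close> by simp
  also have "\<dots> \<le> (\<Sum>v\<in>E. card (nbhd V H (E - {v})))"
    using codeg edge_minus_vertex_in_shadow[OF H \<open>E \<in> H\<close>] by (intro sum_mono) auto
  also have "\<dots> = card (\<Union>v\<in>E. nbhd V H (E - {v}))"
  proof (rule card_UN_disjoint[symmetric])
    have "\<And>D. D \<in> shadow r H \<Longrightarrow> r \<le> card (nbhd V H D)"
      using codeg False unfolding d_def by fastforce
    then show "\<forall>v\<in>E. \<forall>w\<in>E. v \<noteq> w \<longrightarrow> nbhd V H (E - {v}) \<inter> nbhd V H (E - {w}) = {}"
      using nbhds_of_edge_disjoint[OF H \<open>r \<ge> 2\<close> \<open>T_free r H\<close> _ \<open>E \<in> H\<close>] by blast
  qed (use \<open>finite E\<close> \<open>finite V\<close> in \<open>auto simp: nbhd_def\<close>)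
  also have "\<dots> \<le> card V"
    using \<open>finite V\<close> by (intro card_mono) (auto simp: nbhd_def)
  finally have "d \<le> card V div r"
    using \<open>r \<ge> 2\<close> by (simp add: less_eq_div_iff_mult_less_eq mult.commute)
  then show ?thesis
    unfolding d_def by simp
qed simp

definition complete_partite :: "nat \<Rightarrow> nat \<Rightarrow> nat set set" where
  "complete_partite r q = {E. E \<subseteq> {0..<r*q} \<and> card E = r \<and> inj_on (\<lambda>x. x div q) E}"

lemma is_rgraph_complete_partite: "r * q \<le> n \<Longrightarrow> is_rgraph r {0..<n} (complete_partite r q)"
  unfolding is_rgraph_def complete_partite_def by auto

lemma complete_partite_nonempty:
  assumes "q > 0"
  shows "complete_partite r q \<noteq> {}"
proof -
  have "inj_on (\<lambda>j. j * q) {0..<r}" "inj_on (\<lambda>x. x div q) ((\<lambda>j. j * q) ` {0..<r})"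
    using assms by (auto simp: inj_on_def)
  then have "(\<lambda>j. j * q) ` {0..<r} \<in> complete_partite r q"
    unfolding complete_partite_def using assms by (auto simp: card_image)
  then show ?thesis
    by blast
qed

lemma image_div_complete_partite:
  assumes "E \<in> complete_partite r q"
  shows "(\<lambda>x. x div q) ` E = {0..<r}"
proof (rule card_subset_eq)
  show "(\<lambda>x. x div q) ` E \<subseteq> {0..<r}"
  proof (rule image_subsetI)
    fix x
    assume "x \<in> E"
    then have "x < r * q"
      using assms unfolding complete_partite_def by auto
    then show "x div q \<in> {0..<r}"
      by (simp add: less_mult_imp_div_less)
  qed
  show "card ((\<lambda>x. x div q) ` E) = card {0..<r}"
    using assms unfolding complete_partite_def by (simp add: card_image)
qed simp

lemma T_free_complete_partite:
  assumes "r \<ge> 2"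
  shows "T_free r (complete_partite r q)"
  unfolding T_free_def
proof
  define p where "p x = x div q" for x
  assume "contains_copy (gen_triangle r) (complete_partite r q)"
  then obtain A a b F where "a \<notin> A" "a \<noteq> b"
    and edges: "insert a A \<in> complete_partite r q" "insert b A \<in> complete_partite r q"
       "F \<in> complete_partite r q" and "a \<in> F" "b \<in> F"
    using contains_gen_triangleE[OF _ assms] by metis
  \<comment> \<open>\<open>a\<close> and \<open>b\<close> both lie in the one part that \<open>A\<close> misses\<close>
  have "p ` insert a A = p ` insert b A"
    using image_div_complete_partite[OF edges(1)] image_div_complete_partite[OF edges(2)]
    unfolding p_def by simp
  moreover have "p a \<notin> p ` A"
    using edges(1) \<open>a \<notin> A\<close> unfolding complete_partite_def p_def by auto
  ultimately have "p a = p b"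
    by auto
  moreover have "inj_on p F"
    using edges(3) unfolding complete_partite_def p_def by simp
  ultimately show False
    using \<open>a \<in> F\<close> \<open>b \<in> F\<close> \<open>a \<noteq> b\<close> by (auto dest: inj_onD)
qed

lemma min_pos_codeg_complete_partite:
  assumes "r > 0" and "q > 0" and "r * q \<le> n"
  shows "q \<le> min_pos_codeg r {0..<n} (complete_partite r q)"
proof (rule le_min_pos_codeg[OF is_rgraph_complete_partite[OF assms(3)] _ complete_partite_nonempty])
  define p where "p x = x div q" for x
  fix D
  assume "D \<in> shadow r (complete_partite r q)"
  then obtain E where "card D = r - 1" "D \<subseteq> E" "E \<in> complete_partite r q"
    unfolding shadow_def by blast
  moreover have "E \<subseteq> {0..<r*q}" "inj_on p E"
    using \<open>E \<in> complete_partite r q\<close> unfolding complete_partite_def p_def by auto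
  ultimately have D: "D \<subseteq> {0..<r*q}" "inj_on p D"
    by (auto intro: inj_on_subset)
  then have "finite D"
    using finite_subset by blast
  have "card (p ` D) < card {0..<r}"
    using D(2) \<open>card D = r - 1\<close> \<open>r > 0\<close> by (simp add: card_image)
  then have "\<not> {0..<r} \<subseteq> p ` D"
    using card_mono[OF finite_imageI[OF \<open>finite D\<close>]] by (meson leD)
  then obtain j where "j < r" "j \<notin> p ` D"
    by (auto simp: subset_iff)
  have "{j*q..<j*q+q} \<subseteq> nbhd {0..<n} (complete_partite r q) D"
  proof
    fix v
    assume "v \<in> {j*q..<j*q+q}"
    then have "p v = j"
      unfolding p_def using \<open>q > 0\<close> by (auto intro: div_nat_eqI simp: mult.commute)
    moreover have "j * q + q \<le> r * q"
      using \<open>j < r\<close> by (metis add.commute mult_Suc mult_le_mono1 Suc_leI)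
    ultimately have "v < r * q" "v \<notin> D"
      using \<open>v \<in> {j*q..<j*q+q}\<close> \<open>j \<notin> p ` D\<close> by auto
    then have "insert v D \<in> complete_partite r q"
      using D \<open>p v = j\<close> \<open>j \<notin> p ` D\<close> \<open>finite D\<close> \<open>card D = r - 1\<close> \<open>r > 0\<close>
      unfolding complete_partite_def p_def by auto
    then show "v \<in> nbhd {0..<n} (complete_partite r q) D"
      unfolding nbhd_def using \<open>v < r * q\<close> assms(3) by simp
  qed
  then have "card {j*q..<j*q+q} \<le> card (nbhd {0..<n} (complete_partite r q) D)"
    by (rule card_mono[rotated]) (simp add: nbhd_def)
  then show "q \<le> card (nbhd {0..<n} (complete_partite r q) D)"
    by simp
qed (simp_all add: assms)

lemma coplus_ex_T_eqI:
  assumes upper: "\<And>H. is_rgraph r {0..<n} H \<Longrightarrow> T_free r H \<Longrightarrow> min_pos_codeg r {0..<n} H \<le> m"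
    and "is_rgraph r {0..<n} H" "T_free r H" "m \<le> min_pos_codeg r {0..<n} H"
  shows "coplus_ex_T n r = m"
proof -
  define S where "S = {min_pos_codeg r {0..<n} H | H. is_rgraph r {0..<n} H \<and> T_free r H}"
  have "S \<subseteq> min_pos_codeg r {0..<n} ` Pow (Pow {0..<n})"
    unfolding S_def is_rgraph_def by auto
  then have "finite S"
    by (rule finite_subset) simp
  moreover have "min_pos_codeg r {0..<n} H \<in> S"
    unfolding S_def using assms(2,3) by blast
  ultimately have "m \<le> Max S"
    using Max_ge assms(4) le_trans by blast
  moreover have "Max S \<le> m"
    using \<open>finite S\<close> \<open>min_pos_codeg r {0..<n} H \<in> S\<close> upper by (subst Max_le_iff) (auto simp: S_def)
  ultimately show ?thesis
    unfolding coplus_ex_T_def S_def[symmetric] by simp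
qed

theorem corollary1p3:
  fixes r n :: nat
  assumes "r \<ge> 3"
    and "2 * n \<ge> (r - 1) * (2 * r + 1)"
  shows "coplus_ex_T n r = n div r"
proof (rule coplus_ex_T_eqI)
  have "2 * ((r - 1) * r) \<le> (r - 1) * (2 * r + 1)"
    by simp
  also have "\<dots> \<le> 2 * n"
    by (rule assms(2))
  finally have "(r - 1) * r \<le> n"
    by simp
  then have "r - 1 \<le> n div r"
    using assms(1) by (simp add: less_eq_div_iff_mult_less_eq)
  then show "min_pos_codeg r {0..<n} H \<le> n div r" if "is_rgraph r {0..<n} H" "T_free r H" for H
    using min_pos_codeg_T_free_le[OF that(1) _ _ that(2)] assms(1) by simp
  have "r * (n div r) \<le> n" "n div r > 0"
    using \<open>r - 1 \<le> n div r\<close> assms(1) by (auto simp: mult.commute)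
  then show "is_rgraph r {0..<n} (complete_partite r (n div r))"
    and "n div r \<le> min_pos_codeg r {0..<n} (complete_partite r (n div r))"
    using is_rgraph_complete_partite min_pos_codeg_complete_partite assms(1) by auto
  show "T_free r (complete_partite r (n div r))"
    using T_free_complete_partite assms(1) by simp
qed

end
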